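(* Under the Local Regularity Assumption (see context), let $L:=\sup\{\|\zeta\|:\zeta\in\partial f(x),\,x\in\mathcal{X}\cap B_\epsilon(\bar x)\}$, assumed finite and positive, and $\tau:=\mu/L$, and suppose $\tau\le1/\sqrt2$. Define $\gamma=\frac{\epsilon\rho}{4L+\epsilon\rho}$, $\lambda=\frac{\gamma\mu^2}{\rho L}$, and $q=\sqrt{1-(1-\gamma)\tau^2}$. Let $x_0\in B_{\epsilon/4}(\bar x)\cap\mathcal{X}$ satisfy $\mathrm{dist}(x_0,\mathcal{X}^* )\le\gamma\mu/\rho$. Then the iterates of the geometrically decaying subgradient method with parameters $\lambda,q$ started at $x_0$ all lie in $B_\epsilon(\bar x)$ and satisfy $$\mathrm{dist}^2(x_k,\mathcal{X}^* )\le\frac{\gamma^2\mu^2}{\rho^2}\big(1-(1-\gamma)\tau^2\big)^k\quad\text{for all }k\ge0.$$ Moreover, the iterates converge to some $x_\infty\in\mathcal{X}^*$ with $\|x_k-x_\infty\|\le\frac{\lambda}{1-q}q^k$ for all $k\ge0$.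
   Context: $\mathbf{E}$ is a Euclidean space with norm $\|\cdot\|$; $B_\epsilon(z)$ is the closed ball of radius $\epsilon$ about $z$; $\mathrm{proj}_{\mathcal{X}}$ is the Euclidean projection. For $f\colon\mathbf{E}\to\mathbb{R}$, $\partial f(x)$ is the (Fréchet) subdifferential: the set of $\xi$ with $f(y)\ge f(x)+\langle\xi,y-x\rangle+o(\|y-x\|)$ as $y\to x$. Local Regularity Assumption: $\mathcal{X}\subset\mathbf{E}$ is nonempty closed convex, $f\colon\mathbf{E}\to\mathbb{R}$ is continuous, $\mathcal{X}^*:=\operatorname{argmin}_{x\in\mathcal{X}}f$ is nonempty, $\bar x\in\mathcal{X}^*$, and $\epsilon,\mu,\rho>0$ satisfy: (local weak convexity) $f(y)\ge f(x)+\langle\zeta,y-x\rangle-\frac\rho2\|y-x\|^2$ for all $x,y\in\mathcal{X}\cap B_\epsilon(\bar x)$ and $\zeta\in\partial f(x)$; (local sharpness) $f(x)-\inf_{\mathcal{X}}f\ge\mu\,\mathrm{dist}(x,\mathcal{X}^* )$ for all $x\in\mathcal{X}\cap B_\epsilon(\bar x)$. Geometrically decaying subgradient method with parameters $\lambda>0$, $q\in(0,1)$: given $x_k$, choose $\zeta_k\in\partial f(x_k)$; if $\zeta_k=0$ set $x_{k+1}=x_k$, otherwise $x_{k+1}=\mathrm{proj}_{\mathcal{X}}\big(x_k-\lambda q^k\frac{\zeta_k}{\|\zeta_k\|}\big)$. *)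

theory Defs
  imports "HOL-Analysis.Analysis"
begin

definition frechet_subdiff :: "('a::euclidean_space \<Rightarrow> real) \<Rightarrow> 'a \<Rightarrow> 'a set" where
  "frechet_subdiff f x = {\<xi>. \<forall>e>0. \<exists>d>0. \<forall>y. norm (y - x) < d \<longrightarrow>
      f y \<ge> f x + \<xi> \<bullet> (y - x) - e * norm (y - x)}"

definition argmin_on :: "('a \<Rightarrow> real) \<Rightarrow> 'a set \<Rightarrow> 'a set" where
  "argmin_on f X = {x \<in> X. \<forall>y\<in>X. f x \<le> f y}"

end

theory Submission
  imports Defs
begin

text \<open>Projection onto \<open>X\<close> is nonexpansive, so the \<open>k\<close>-th step moves the iterate by at most
  \<open>\<lambda> q\<^sup>k\<close>. Summing the geometric series, the iterates stay within \<open>\<epsilon>/4 + \<lambda>/(1 - q) \<le> 3\<epsilon>/4\<close>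
  of \<open>xbar\<close> and converge at rate \<open>\<lambda> q\<^sup>k/(1 - q)\<close>. Inside that ball, weak convexity and sharpness
  give \<open>\<langle>\<zeta>, x - y\<rangle> \<ge> \<mu> d - \<rho>/2 d\<^sup>2\<close> for a nearest minimizer \<open>y\<close> at distance \<open>d\<close>; expanding
  the squared distance after a step of length \<open>\<tau> s\<close> shows that \<open>d \<le> s \<le> \<gamma>\<mu>/\<rho>\<close> implies
  distance at most \<open>q s\<close> after the step. With \<open>s = (\<gamma>\<mu>/\<rho>) q\<^sup>k\<close> this is the claimed linear rate,
  and the limit is a minimizer because the set of minimizers is closed.\<close>

definition subgradient_step :: "'a::euclidean_space set \<Rightarrow> real \<Rightarrow> 'a \<Rightarrow> 'a \<Rightarrow> 'a" where
  "subgradient_step X t \<zeta> x = (if \<zeta> = 0 then x else closest_point X (x - (t / norm \<zeta>) *\<^sub>R \<zeta>))"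

lemma subgradient_step_in_set:
  assumes "closed X" "x \<in> X"
  shows "subgradient_step X t \<zeta> x \<in> X"
  using assms closest_point_in_set[of X] by (auto simp: subgradient_step_def)

lemma dist_subgradient_step_le:
  assumes "convex X" "closed X" "x \<in> X" "0 \<le> t"
  shows "dist (subgradient_step X t \<zeta> x) x \<le> t"
proof (cases "\<zeta> = 0")
  case False
  have "dist (subgradient_step X t \<zeta> x) x
      = dist (closest_point X (x - (t / norm \<zeta>) *\<^sub>R \<zeta>)) (closest_point X x)"
    using False assms(3) by (simp add: subgradient_step_def closest_point_self)
  also have "\<dots> \<le> dist (x - (t / norm \<zeta>) *\<^sub>R \<zeta>) x"
    using assms by (intro closest_point_lipschitz) auto
  also have "\<dots> = t"
    using False assms(4) by (simp add: dist_norm)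
  finally show ?thesis .
qed (simp add: subgradient_step_def assms)

lemma dist_subgradient_step_sq_le:
  assumes "convex X" "closed X" "y \<in> X" "\<zeta> \<noteq> 0"
  shows "(dist (subgradient_step X t \<zeta> x) y)\<^sup>2
           \<le> (dist x y)\<^sup>2 - 2 * t * (\<zeta> \<bullet> (x - y)) / norm \<zeta> + t\<^sup>2"
proof -
  have "dist (subgradient_step X t \<zeta> x) y
      = dist (closest_point X (x - (t / norm \<zeta>) *\<^sub>R \<zeta>)) (closest_point X y)"
    using assms by (simp add: subgradient_step_def closest_point_self)
  also have "\<dots> \<le> dist (x - (t / norm \<zeta>) *\<^sub>R \<zeta>) y"
    using assms by (intro closest_point_lipschitz) auto
  also have "\<dots> = norm ((x - y) - (t / norm \<zeta>) *\<^sub>R \<zeta>)"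
    by (simp add: dist_norm algebra_simps)
  finally have "(dist (subgradient_step X t \<zeta> x) y)\<^sup>2 \<le> (norm ((x - y) - (t / norm \<zeta>) *\<^sub>R \<zeta>))\<^sup>2"
    by (intro power_mono) auto
  also have "\<dots> = (norm (x - y))\<^sup>2 - 2 * (t / norm \<zeta>) * (\<zeta> \<bullet> (x - y))
                 + (t / norm \<zeta>)\<^sup>2 * (norm \<zeta>)\<^sup>2"
    unfolding power2_norm_eq_inner
    by (simp add: inner_diff_left inner_diff_right inner_commute algebra_simps power2_eq_square
        diff_divide_distrib)
  also have "\<dots> = (dist x y)\<^sup>2 - 2 * t * (\<zeta> \<bullet> (x - y)) / norm \<zeta> + t\<^sup>2"
    using assms(4) by (simp add: dist_norm power_divide)
  finally show ?thesis .
qed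

lemma dist_le_geometric_tail:
  fixes x :: "nat \<Rightarrow> 'a::metric_space"
  assumes steps: "\<And>k. dist (x (Suc k)) (x k) \<le> a * q ^ k" and "0 \<le> q" "q < 1" and "k \<le> m"
  shows "dist (x m) (x k) \<le> a * q ^ k / (1 - q)"
proof -
  have partial: "dist (x (k + j)) (x k) \<le> a * q ^ k * (1 - q ^ j) / (1 - q)" for j
  proof (induction j)
    case (Suc j)
    have "dist (x (k + Suc j)) (x k) \<le> dist (x (Suc (k + j))) (x (k + j)) + dist (x (k + j)) (x k)"
      by (simp add: dist_triangle)
    also have "\<dots> \<le> a * q ^ (k + j) + a * q ^ k * (1 - q ^ j) / (1 - q)"
      using steps[of "k + j"] Suc.IH by linarith
    also have "\<dots> = a * q ^ k * (1 - q ^ Suc j) / (1 - q)"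
      using \<open>q < 1\<close> by (simp add: field_simps power_add)
    finally show ?case .
  qed simp
  have "0 \<le> a" using order_trans[OF zero_le_dist steps[of 0]] by simp
  then have "a * q ^ k * (1 - q ^ (m - k)) \<le> a * q ^ k"
    using \<open>0 \<le> q\<close> by (simp add: mult_left_le)
  then show ?thesis
    using partial[of "m - k"] \<open>k \<le> m\<close> \<open>q < 1\<close> by (simp add: divide_right_mono order_trans)
qed

lemma geometric_steps_converge:
  fixes x :: "nat \<Rightarrow> 'a::complete_space"
  assumes steps: "\<And>k. dist (x (Suc k)) (x k) \<le> a * q ^ k" and "0 \<le> q" "q < 1"
  obtains l where "x \<longlonglongrightarrow> l" "\<And>k. dist (x k) l \<le> a * q ^ k / (1 - q)"
proof -
  note tail = dist_le_geometric_tail[OF steps \<open>0 \<le> q\<close> \<open>q < 1\<close>]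
  have "(\<lambda>k. a * q ^ k / (1 - q)) \<longlonglongrightarrow> a * 0 / (1 - q)"
    using assms by (intro tendsto_intros LIMSEQ_power_zero) auto
  then have small: "\<forall>\<^sub>F k in sequentially. a * q ^ k / (1 - q) < e" if "0 < e" for e
    using that by (intro order_tendstoD(2)) auto
  have "Cauchy x"
  proof (rule metric_CauchyI)
    fix e :: real assume "0 < e"
    then obtain M where M: "a * q ^ M / (1 - q) < e / 2"
      using small[of "e / 2"] by (auto simp: eventually_sequentially)
    have "dist (x m) (x n) < e" if "M \<le> m" "M \<le> n" for m n
      using dist_triangle2[of "x m" "x n" "x M"] tail[OF that(1)] tail[OF that(2)] M by linarith
    then show "\<exists>M. \<forall>m\<ge>M. \<forall>n\<ge>M. dist (x m) (x n) < e" by blast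
  qed
  then obtain l where lim: "x \<longlonglongrightarrow> l"
    using Cauchy_convergent_iff convergent_def by blast
  have "dist l (x k) \<le> a * q ^ k / (1 - q)" for k
  proof (rule LIMSEQ_le_const2)
    show "(\<lambda>m. dist (x m) (x k)) \<longlonglongrightarrow> dist l (x k)" by (intro tendsto_intros lim)
  qed (use tail in blast)
  then show thesis using lim that by (simp add: dist_commute)
qed

lemma Lim_in_closed_set_infdist:
  assumes "closed S" "S \<noteq> {}" "x \<longlonglongrightarrow> l" "(\<lambda>k. infdist (x k) S) \<longlonglongrightarrow> 0"
  shows "l \<in> S"
proof -
  have "(\<lambda>k. infdist (x k) S) \<longlonglongrightarrow> infdist l S" by (intro tendsto_infdist assms)
  then have "infdist l S = 0" using assms(4) LIMSEQ_unique by blast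
  then show ?thesis using in_closed_iff_infdist_zero assms(1,2) by blast
qed

text \<open>The difference of the two sides factors as \<open>(s - d) ((1 + g t\<^sup>2) (d + s) - 2 t\<^sup>2 s)\<close>.\<close>
lemma quadratic_contraction_le:
  fixes d s t g :: real
  assumes "0 \<le> d" "d \<le> s" "t\<^sup>2 \<le> 1 / 2" "0 \<le> g"
  shows "d\<^sup>2 - 2 * t\<^sup>2 * s * d + g * t\<^sup>2 * d\<^sup>2 + t\<^sup>2 * s\<^sup>2 \<le> s\<^sup>2 * (1 - (1 - g) * t\<^sup>2)"
proof -
  have "2 * t\<^sup>2 * s \<le> s" using assms mult_right_mono[of "2 * t\<^sup>2" 1 s] by auto
  moreover have "d + s \<le> (1 + g * t\<^sup>2) * (d + s)" using assms by (simp add: algebra_simps)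
  ultimately have "(s - d) * ((1 + g * t\<^sup>2) * (d + s) - 2 * t\<^sup>2 * s) \<ge> 0"
    using assms by (intro mult_nonneg_nonneg) auto
  then show ?thesis by (simp add: algebra_simps power2_eq_square)
qed

lemma subgradient_step_recursion_le:
  fixes \<mu> L \<rho> \<gamma> d s :: real
  assumes "0 \<le> d" "d \<le> s" "\<rho> * s \<le> \<gamma> * \<mu>" "0 < L" "0 \<le> \<mu>" "0 \<le> \<gamma>" "(\<mu> / L)\<^sup>2 \<le> 1 / 2"
  shows "d\<^sup>2 - 2 * (\<mu> / L * s) * (\<mu> * d - \<rho> / 2 * d\<^sup>2) / L + (\<mu> / L * s)\<^sup>2
           \<le> s\<^sup>2 * (1 - (1 - \<gamma>) * (\<mu> / L)\<^sup>2)"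
proof -
  define \<tau> where "\<tau> = \<mu> / L"
  have "\<tau> * (\<rho> * s) / L \<le> \<tau> * (\<gamma> * \<mu>) / L"
    using assms by (intro divide_right_mono mult_left_mono) (auto simp: \<tau>_def)
  then have "\<tau> * s * \<rho> / L * d\<^sup>2 \<le> \<gamma> * \<tau>\<^sup>2 * d\<^sup>2"
    by (intro mult_right_mono) (auto simp: \<tau>_def power2_eq_square algebra_simps)
  moreover have "d\<^sup>2 - 2 * (\<tau> * s) * (\<mu> * d - \<rho> / 2 * d\<^sup>2) / L + (\<tau> * s)\<^sup>2
      = d\<^sup>2 - 2 * \<tau>\<^sup>2 * s * d + \<tau> * s * \<rho> / L * d\<^sup>2 + \<tau>\<^sup>2 * s\<^sup>2"
    using assms(4) by (simp add: \<tau>_def field_simps power2_eq_square)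
  ultimately show ?thesis
    using quadratic_contraction_le[of d s \<tau> \<gamma>] assms unfolding \<tau>_def[symmetric] by linarith
qed

lemma stepsize_parameters:
  fixes \<epsilon> \<rho> \<mu> L \<gamma> q :: real
  assumes pos: "0 < \<epsilon>" "0 < \<rho>" "0 < \<mu>" "0 < L" and \<tau>: "\<mu> / L \<le> 1 / sqrt 2"
    and \<gamma>: "\<gamma> = \<epsilon> * \<rho> / (4 * L + \<epsilon> * \<rho>)" and q: "q = sqrt (1 - (1 - \<gamma>) * (\<mu> / L)\<^sup>2)"
  shows "0 < \<gamma>" "\<gamma> < 1" "(\<mu> / L)\<^sup>2 \<le> 1 / 2" "0 < q" "q < 1" "q\<^sup>2 = 1 - (1 - \<gamma>) * (\<mu> / L)\<^sup>2"
    and "\<gamma> * \<mu>\<^sup>2 / (\<rho> * L) / (1 - q) \<le> \<epsilon> / 2" "\<gamma> * \<mu> / \<rho> \<le> \<epsilon> / 4"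
proof -
  have den: "0 < 4 * L + \<epsilon> * \<rho>" using pos by (simp add: add_pos_pos)
  show \<gamma>0: "0 < \<gamma>" and \<gamma>1: "\<gamma> < 1" using den pos by (simp_all add: \<gamma>)
  have "(\<mu> / L)\<^sup>2 \<le> (1 / sqrt 2)\<^sup>2" using \<tau> pos by (intro power_mono) auto
  then show \<tau>2: "(\<mu> / L)\<^sup>2 \<le> 1 / 2" by (simp add: power_divide)
  then have \<tau>1: "\<mu> / L \<le> 1" using power2_le_imp_le[of "\<mu> / L" 1] by simp
  define c where "c = (1 - \<gamma>) * (\<mu> / L)\<^sup>2"
  have c0: "0 < c" using \<gamma>1 pos by (simp add: c_def)
  have "c \<le> (\<mu> / L)\<^sup>2" using \<gamma>0 mult_right_mono[of "1 - \<gamma>" 1 "(\<mu> / L)\<^sup>2"] by (simp add: c_def)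
  then have c1: "c \<le> 1 / 2" using \<tau>2 by simp
  have q_c: "q = sqrt (1 - c)" by (simp add: q c_def)
  show "0 < q" using c1 by (simp add: q_c)
  show "q\<^sup>2 = 1 - (1 - \<gamma>) * (\<mu> / L)\<^sup>2" using c1 by (simp add: q_c c_def)
  have "q \<le> sqrt ((1 - c / 2)\<^sup>2)"
    unfolding q_c by (rule real_sqrt_le_mono) (simp add: power2_eq_square algebra_simps)
  then have "q \<le> 1 - c / 2" using c1 by simp
  then show q1: "q < 1" using c0 by simp
  have "1 - \<gamma> = 4 * L / (4 * L + \<epsilon> * \<rho>)"
    using den by (simp add: \<gamma> field_simps)
  then have \<gamma>_ratio: "\<gamma> / (1 - \<gamma>) = \<epsilon> * \<rho> / (4 * L)"
    using den pos by (simp add: \<gamma>)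
  have "\<gamma> * \<mu>\<^sup>2 / (\<rho> * L) / (1 - q) \<le> \<gamma> * \<mu>\<^sup>2 / (\<rho> * L) / (c / 2)"
    using \<open>q \<le> 1 - c / 2\<close> q1 c0 \<gamma>0 pos by (intro divide_left_mono) auto
  also have "\<dots> = 2 * (\<gamma> / (1 - \<gamma>)) * L / \<rho>"
    using \<gamma>1 pos by (simp add: c_def power2_eq_square field_simps)
  also have "\<dots> = \<epsilon> / 2"
    using pos by (simp add: \<gamma>_ratio)
  finally show "\<gamma> * \<mu>\<^sup>2 / (\<rho> * L) / (1 - q) \<le> \<epsilon> / 2" .
  have "\<gamma> * \<mu> / \<rho> = \<epsilon> * \<mu> / (4 * L + \<epsilon> * \<rho>)" using pos by (simp add: \<gamma>)
  also have "\<dots> \<le> \<epsilon> * \<mu> / (4 * L)" using pos den by (intro divide_left_mono) auto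
  also have "\<dots> = \<epsilon> / 4 * (\<mu> / L)" by simp
  also have "\<dots> \<le> \<epsilon> / 4" using \<tau>1 pos by (intro mult_left_le) auto
  finally show "\<gamma> * \<mu> / \<rho> \<le> \<epsilon> / 4" .
qed

locale local_regularity =
  fixes f :: "'a::euclidean_space \<Rightarrow> real" and X :: "'a set" and xbar :: 'a and \<epsilon> \<mu> \<rho> :: real
  assumes closed: "closed X" and convex: "convex X" and f_cont: "continuous_on UNIV f"
    and xbar_in: "xbar \<in> argmin_on f X"
    and eps_pos: "\<epsilon> > 0" and mu_pos: "\<mu> > 0" and rho_pos: "\<rho> > 0"
    and weak_convex: "\<And>x y \<zeta>. x \<in> X \<inter> cball xbar \<epsilon> \<Longrightarrow> y \<in> X \<inter> cball xbar \<epsilon> \<Longrightarrow>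
          \<zeta> \<in> frechet_subdiff f x \<Longrightarrow> f y \<ge> f x + \<zeta> \<bullet> (y - x) - \<rho> / 2 * (norm (y - x))\<^sup>2"
    and sharp: "\<And>x. x \<in> X \<inter> cball xbar \<epsilon> \<Longrightarrow>
          f x - Inf (f ` X) \<ge> \<mu> * infdist x (argmin_on f X)"
begin

abbreviation Xstar :: "'a set" where
  "Xstar \<equiv> argmin_on f X"

lemma Xstar_eq: "Xstar = X \<inter> {z. f z \<le> f xbar}"
  using xbar_in unfolding argmin_on_def by (auto intro: order_trans)

lemma closed_Xstar: "closed Xstar"
  unfolding Xstar_eq by (intro closed_Int closed closed_Collect_le f_cont continuous_on_const)

lemma Xstar_nonempty: "Xstar \<noteq> {}"
  using xbar_in by auto

lemma Inf_eq_min_value: "Inf (f ` X) = f xbar"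
  using xbar_in unfolding argmin_on_def by (intro cInf_eq_minimum) auto

lemma nearest_minimizer_inner_ge:
  assumes x: "x \<in> X" and \<zeta>: "\<zeta> \<in> frechet_subdiff f x" and near: "dist xbar x + infdist x Xstar \<le> \<epsilon>"
  obtains y where "y \<in> Xstar" "dist x y = infdist x Xstar"
    "\<mu> * infdist x Xstar - \<rho> / 2 * (infdist x Xstar)\<^sup>2 \<le> \<zeta> \<bullet> (x - y)"
proof -
  obtain y where y: "y \<in> Xstar" and dy: "infdist x Xstar = dist x y"
    using infdist_attains_inf[OF closed_Xstar Xstar_nonempty] by blast
  have "dist xbar y \<le> \<epsilon>" using dist_triangle[of xbar y x] near dy by linarith
  then have y_ball: "y \<in> X \<inter> cball xbar \<epsilon>" using y unfolding argmin_on_def by auto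
  have x_ball: "x \<in> X \<inter> cball xbar \<epsilon>" using x near infdist_nonneg[of x Xstar] by auto
  have "f y = f xbar" using y Xstar_eq xbar_in unfolding argmin_on_def by (auto intro: antisym)
  moreover have "norm (y - x) = infdist x Xstar" by (simp add: dy dist_norm norm_minus_commute)
  then have "f x - \<zeta> \<bullet> (x - y) - \<rho> / 2 * (infdist x Xstar)\<^sup>2 \<le> f y"
    using weak_convex[OF x_ball y_ball \<zeta>] by (simp add: inner_diff_right)
  ultimately have "\<mu> * infdist x Xstar - \<rho> / 2 * (infdist x Xstar)\<^sup>2 \<le> \<zeta> \<bullet> (x - y)"
    using sharp[OF x_ball] Inf_eq_min_value by linarith
  with that y dy show thesis by simp
qed

lemma subgradient_step_dist_Xstar:
  assumes x: "x \<in> X" and \<zeta>: "\<zeta> \<in> frechet_subdiff f x" and "norm \<zeta> \<le> L"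
    and near: "dist xbar x + infdist x Xstar \<le> \<epsilon>" and small: "\<rho> * infdist x Xstar \<le> \<mu>" and "0 \<le> t"
  defines "d \<equiv> infdist x Xstar"
  shows "(infdist (subgradient_step X t \<zeta> x) Xstar)\<^sup>2 \<le> d\<^sup>2 - 2 * t * (\<mu> * d - \<rho> / 2 * d\<^sup>2) / L + t\<^sup>2"
proof -
  obtain y where y: "y \<in> Xstar" "dist x y = d" and inner: "\<mu> * d - \<rho> / 2 * d\<^sup>2 \<le> \<zeta> \<bullet> (x - y)"
    using nearest_minimizer_inner_ge[OF x \<zeta> near] unfolding d_def by blast
  have d0: "0 \<le> d" unfolding d_def by (rule infdist_nonneg)
  have "\<rho> / 2 * d\<^sup>2 \<le> \<mu> * d / 2"
    using mult_right_mono[OF small[folded d_def] d0] by (simp add: power2_eq_square)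
  then have P: "\<mu> * d / 2 \<le> \<mu> * d - \<rho> / 2 * d\<^sup>2" by linarith
  show ?thesis
  proof (cases "\<zeta> = 0")
    case True
    then have "\<mu> * d \<le> 0" using inner P by simp
    then have "d = 0" using d0 mu_pos by (simp add: mult_le_0_iff)
    then show ?thesis using True by (simp add: subgradient_step_def d_def)
  next
    case False
    have "0 < norm \<zeta>" using False by simp
    then have "0 < L * norm \<zeta>" using \<open>norm \<zeta> \<le> L\<close> by (meson mult_pos_pos order_less_le_trans)
    moreover have "0 \<le> \<mu> * d - \<rho> / 2 * d\<^sup>2" using P d0 mu_pos zero_le_mult_iff[of \<mu> d] by linarith
    ultimately have "(\<mu> * d - \<rho> / 2 * d\<^sup>2) / L \<le> (\<mu> * d - \<rho> / 2 * d\<^sup>2) / norm \<zeta>"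
      using \<open>norm \<zeta> \<le> L\<close> by (intro divide_left_mono)
    also have "\<dots> \<le> (\<zeta> \<bullet> (x - y)) / norm \<zeta>"
      using inner by (intro divide_right_mono) auto
    finally have "2 * t * ((\<mu> * d - \<rho> / 2 * d\<^sup>2) / L) \<le> 2 * t * ((\<zeta> \<bullet> (x - y)) / norm \<zeta>)"
      using \<open>0 \<le> t\<close> by (intro mult_left_mono) auto
    then have descent: "2 * t * (\<zeta> \<bullet> (x - y)) / norm \<zeta> \<ge> 2 * t * (\<mu> * d - \<rho> / 2 * d\<^sup>2) / L"
      by simp
    have "(infdist (subgradient_step X t \<zeta> x) Xstar)\<^sup>2 \<le> (dist (subgradient_step X t \<zeta> x) y)\<^sup>2"
      using infdist_le[OF y(1)] by (intro power_mono) (auto simp: infdist_nonneg)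
    also have "\<dots> \<le> d\<^sup>2 - 2 * t * (\<zeta> \<bullet> (x - y)) / norm \<zeta> + t\<^sup>2"
      using dist_subgradient_step_sq_le[OF convex closed _ False] y Xstar_eq by auto
    also have "\<dots> \<le> d\<^sup>2 - 2 * t * (\<mu> * d - \<rho> / 2 * d\<^sup>2) / L + t\<^sup>2"
      using descent by linarith
    finally show ?thesis .
  qed
qed

lemma dist_Xstar_linear_convergence:
  assumes L: "0 < L" "(\<mu> / L)\<^sup>2 \<le> 1 / 2" and \<gamma>: "0 \<le> \<gamma>" "\<gamma> \<le> 1" and D: "D = \<gamma> * \<mu> / \<rho>"
    and q: "0 \<le> q" "q\<^sup>2 = 1 - (1 - \<gamma>) * (\<mu> / L)\<^sup>2"
    and x_in: "\<And>k. x k \<in> X" and near: "\<And>k. dist xbar (x k) + D \<le> \<epsilon>"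
    and \<zeta>: "\<And>k. \<zeta> k \<in> frechet_subdiff f (x k)" "\<And>k. norm (\<zeta> k) \<le> L"
    and iter: "\<And>k. x (Suc k) = subgradient_step X (\<mu> / L * (D * q ^ k)) (\<zeta> k) (x k)"
    and start: "infdist (x 0) Xstar \<le> D"
  shows "infdist (x k) Xstar \<le> D * q ^ k"
proof (induction k)
  case (Suc k)
  define d where "d = infdist (x k) Xstar"
  have D0: "0 \<le> D" using \<gamma> mu_pos rho_pos by (simp add: D)
  have "q\<^sup>2 \<le> 1\<^sup>2" using q \<gamma> by simp
  then have "q \<le> 1" by (rule power2_le_imp_le) simp
  then have "q ^ k \<le> 1" using q(1) by (rule power_le_one[rotated])
  then have s_le: "D * q ^ k \<le> D" using D0 by (simp add: mult_left_le)
  have d_le: "d \<le> D * q ^ k" using Suc.IH by (simp add: d_def)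
  have s_small: "\<rho> * (D * q ^ k) \<le> \<gamma> * \<mu>"
    using mult_left_mono[OF s_le, of \<rho>] rho_pos by (simp add: D)
  have "(infdist (x (Suc k)) Xstar)\<^sup>2
      \<le> d\<^sup>2 - 2 * (\<mu> / L * (D * q ^ k)) * (\<mu> * d - \<rho> / 2 * d\<^sup>2) / L + (\<mu> / L * (D * q ^ k))\<^sup>2"
    unfolding iter d_def
  proof (rule subgradient_step_dist_Xstar[OF x_in \<zeta>])
    show "dist xbar (x k) + infdist (x k) Xstar \<le> \<epsilon>"
      using near[of k] d_le s_le unfolding d_def by linarith
    have "\<rho> * d \<le> \<rho> * (D * q ^ k)" using d_le rho_pos by simp
    then show "\<rho> * infdist (x k) Xstar \<le> \<mu>"
      using s_small \<gamma> mu_pos mult_left_le_one_le[of \<mu> \<gamma>] unfolding d_def by linarith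
    show "0 \<le> \<mu> / L * (D * q ^ k)" using mu_pos L D0 q(1) by simp
  qed
  also have "\<dots> \<le> (D * q ^ k)\<^sup>2 * (1 - (1 - \<gamma>) * (\<mu> / L)\<^sup>2)"
    by (rule subgradient_step_recursion_le[OF _ d_le s_small L(1)])
      (use L \<gamma> mu_pos in \<open>auto simp: d_def infdist_nonneg\<close>)
  also have "\<dots> = (D * q ^ Suc k)\<^sup>2"
    unfolding q(2)[symmetric] by (simp add: power_mult_distrib power_Suc2 mult.assoc)
  finally show ?case
    by (rule power2_le_imp_le) (use D0 q(1) in simp)
qed (simp add: start)

end

theorem theorem5p6:
  fixes f :: "'a::euclidean_space \<Rightarrow> real"
    and X :: "'a set" and xbar :: 'a
    and \<epsilon> \<mu> \<rho> L \<tau> \<gamma> lam q :: real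
    and x \<zeta> :: "nat \<Rightarrow> 'a"
  assumes X_nonempty: "X \<noteq> {}" and X_closed: "closed X" and X_convex: "convex X"
    and f_cont: "continuous_on UNIV f"
    and Xstar_nonempty: "argmin_on f X \<noteq> {}"
    and xbar_in: "xbar \<in> argmin_on f X"
    and eps_pos: "\<epsilon> > 0" and mu_pos: "\<mu> > 0" and rho_pos: "\<rho> > 0"
    and weak_convex: "\<And>x y \<zeta>. x \<in> X \<inter> cball xbar \<epsilon> \<Longrightarrow> y \<in> X \<inter> cball xbar \<epsilon> \<Longrightarrow>
          \<zeta> \<in> frechet_subdiff f x \<Longrightarrow> f y \<ge> f x + \<zeta> \<bullet> (y - x) - \<rho> / 2 * (norm (y - x))\<^sup>2"
    and sharp: "\<And>x. x \<in> X \<inter> cball xbar \<epsilon> \<Longrightarrow>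
          f x - Inf (f ` X) \<ge> \<mu> * infdist x (argmin_on f X)"
    and L_nonempty: "{norm \<zeta> | \<zeta> x. x \<in> X \<inter> cball xbar \<epsilon> \<and> \<zeta> \<in> frechet_subdiff f x} \<noteq> {}"
    and L_bdd: "bdd_above {norm \<zeta> | \<zeta> x. x \<in> X \<inter> cball xbar \<epsilon> \<and> \<zeta> \<in> frechet_subdiff f x}"
    and L_def: "L = Sup {norm \<zeta> | \<zeta> x. x \<in> X \<inter> cball xbar \<epsilon> \<and> \<zeta> \<in> frechet_subdiff f x}"
    and L_pos: "L > 0"
    and tau_def: "\<tau> = \<mu> / L"
    and tau_le: "\<tau> \<le> 1 / sqrt 2"
    and gamma_def: "\<gamma> = \<epsilon> * \<rho> / (4 * L + \<epsilon> * \<rho>)"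
    and lambda_def: "lam = \<gamma> * \<mu>\<^sup>2 / (\<rho> * L)"
    and q_def: "q = sqrt (1 - (1 - \<gamma>) * \<tau>\<^sup>2)"
    and x0_in: "x 0 \<in> cball xbar (\<epsilon> / 4) \<inter> X"
    and x0_dist: "infdist (x 0) (argmin_on f X) \<le> \<gamma> * \<mu> / \<rho>"
    and zeta_sub: "\<And>k. \<zeta> k \<in> frechet_subdiff f (x k)"
    and step: "\<And>k. x (Suc k) = (if \<zeta> k = 0 then x k
                 else closest_point X (x k - (lam * q ^ k / norm (\<zeta> k)) *\<^sub>R \<zeta> k))"
  shows "(\<forall>k. x k \<in> cball xbar \<epsilon>) \<and>
         (\<forall>k. (infdist (x k) (argmin_on f X))\<^sup>2
                \<le> \<gamma>\<^sup>2 * \<mu>\<^sup>2 / \<rho>\<^sup>2 * (1 - (1 - \<gamma>) * \<tau>\<^sup>2) ^ k) \<and>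
         (\<exists>xinf \<in> argmin_on f X. x \<longlonglongrightarrow> xinf \<and>
            (\<forall>k. norm (x k - xinf) \<le> lam / (1 - q) * q ^ k))"
proof -
  interpret local_regularity f X xbar \<epsilon> \<mu> \<rho>
    by unfold_locales (fact X_closed X_convex f_cont xbar_in eps_pos mu_pos rho_pos weak_convex sharp)+
  define D where "D = \<gamma> * \<mu> / \<rho>"
  note params = stepsize_parameters[OF eps_pos rho_pos mu_pos L_pos tau_le[unfolded tau_def] gamma_def
      q_def[unfolded tau_def], folded tau_def lambda_def D_def]
  have \<gamma>: "0 < \<gamma>" "\<gamma> < 1" and \<tau>2: "\<tau>\<^sup>2 \<le> 1 / 2" and q: "0 < q" "q < 1"
    and q2: "q\<^sup>2 = 1 - (1 - \<gamma>) * \<tau>\<^sup>2" and lam_tail: "lam / (1 - q) \<le> \<epsilon> / 2" and D_le: "D \<le> \<epsilon> / 4"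
    using params by auto
  have step_length: "lam * q ^ k = \<mu> / L * (D * q ^ k)" for k
    unfolding lambda_def D_def by (simp add: power2_eq_square field_simps)
  have iter: "x (Suc k) = subgradient_step X (lam * q ^ k) (\<zeta> k) (x k)" for k
    unfolding step subgradient_step_def ..
  have xX: "x k \<in> X" for k
    by (induction k) (use x0_in in \<open>auto simp: iter intro: subgradient_step_in_set[OF closed]\<close>)
  have steps: "dist (x (Suc k)) (x k) \<le> lam * q ^ k" for k
    unfolding iter using \<gamma> q mu_pos rho_pos L_pos
    by (intro dist_subgradient_step_le convex closed xX) (simp add: step_length D_def)
  obtain xinf where lim: "x \<longlonglongrightarrow> xinf" and rate: "\<And>k. dist (x k) xinf \<le> lam * q ^ k / (1 - q)"
    using geometric_steps_converge[OF steps] q by auto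
  have near: "dist xbar (x k) \<le> 3 * \<epsilon> / 4" for k
    using dist_triangle[of xbar "x k" "x 0"] dist_le_geometric_tail[OF steps _ _ le0, of k] q
      x0_in lam_tail by (simp add: dist_commute)
  have x_ball: "x k \<in> X \<inter> cball xbar \<epsilon>" for k
    using xX near[of k] eps_pos by auto
  have \<zeta>_le: "norm (\<zeta> k) \<le> L" for k
    unfolding L_def by (rule cSup_upper[OF _ L_bdd]) (use zeta_sub x_ball in blast)
  have near_D: "dist xbar (x k) + D \<le> \<epsilon>" for k
    using near[of k] D_le by linarith
  have dist_Xstar: "infdist (x k) Xstar \<le> D * q ^ k" for k
    by (rule dist_Xstar_linear_convergence[OF L_pos \<tau>2[unfolded tau_def] _ _ D_def _ q2[unfolded tau_def]
          xX near_D zeta_sub \<zeta>_le])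
      (use \<gamma> q(1) x0_dist[folded D_def] in \<open>auto simp: iter step_length\<close>)
  have "xinf \<in> Xstar"
  proof (rule Lim_in_closed_set_infdist[OF closed_Xstar Xstar_nonempty lim])
    have bound_lim: "(\<lambda>k. D * q ^ k) \<longlonglongrightarrow> 0"
      using q by (intro tendsto_mult_right_zero LIMSEQ_power_zero) auto
    show "(\<lambda>k. infdist (x k) Xstar) \<longlonglongrightarrow> 0"
      by (rule tendsto_sandwich[OF _ _ tendsto_const bound_lim]) (auto simp: infdist_nonneg dist_Xstar)
  qed
  moreover have "(infdist (x k) Xstar)\<^sup>2 \<le> \<gamma>\<^sup>2 * \<mu>\<^sup>2 / \<rho>\<^sup>2 * (1 - (1 - \<gamma>) * \<tau>\<^sup>2) ^ k" for k
  proof -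
    have "(infdist (x k) Xstar)\<^sup>2 \<le> (D * q ^ k)\<^sup>2"
      using dist_Xstar by (intro power_mono) (auto simp: infdist_nonneg)
    also have "\<dots> = D\<^sup>2 * (q\<^sup>2) ^ k"
      by (simp add: power_mult_distrib flip: power_mult) (simp add: mult.commute)
    finally show ?thesis
      unfolding q2 D_def by (simp add: power_divide power_mult_distrib)
  qed
  moreover have "norm (x k - xinf) \<le> lam / (1 - q) * q ^ k" for k
    using rate[of k] by (simp add: dist_norm)
  ultimately show ?thesis
    using x_ball lim by blast
qed

end
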